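(* For every integer $n\ge0$, $$E_{2n+1}=a_{2n+1,n}=\frac{1}{2^n}\Big(-A_{2n+1,n}+2\sum_{i=0}^{\lfloor n/2\rfloor}(-1)^iA_{2n+1,n-2i}\Big),$$ $$E_{2n+2}=a_{2n+2,n}=\frac{1}{2^n}\Big(-\sum_{j=0}^{n}(-1)^{n-j}A_{2n+2,j}+2\sum_{\substack{i,j\ge0\\ 2i+j\le n}}(-1)^{n-i-j}A_{2n+2,j}\Big).$$
   Context: For a permutation $\pi=a_1\cdots a_n$ of $[n]$, an index $i\in[n-1]$ is a descent if $a_i>a_{i+1}$. $A_{n,k}$ (Eulerian number) is the number of $\pi\in\mathfrak S_n$ with exactly $k$ descents. $a_{n,k}$ is the number of $\pi\in\mathfrak S_n$ having exactly $k$ descents at even positions and no descents at odd positions. $E_n$ (Euler number) is the number of alternating permutations $a_1>a_2<a_3>\cdots$ in $\mathfrak S_n$ (equivalently of reverse alternating ones $a_1<a_2>a_3<\cdots$); $\sum_{n\ge0}E_nt^n/n!=\tan t+\sec t$. *)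

theory Defs
  imports "HOL-Combinatorics.Multiset_Permutations"
begin

text \<open>Permutations of [n] are represented as lists a_1 ... a_n (0-indexed in Isabelle:
  a_i = p ! (i - 1)). Index i in [n-1] is a descent iff a_i > a_{i+1}.\<close>

definition descents :: "nat list \<Rightarrow> nat set" where
  "descents p = {i. 1 \<le> i \<and> i < length p \<and> p ! (i - 1) > p ! i}"

definition eulerian :: "nat \<Rightarrow> nat \<Rightarrow> nat" where
  "eulerian n k = card {p \<in> permutations_of_set {1..n}. card (descents p) = k}"

definition a_num :: "nat \<Rightarrow> nat \<Rightarrow> nat" where
  "a_num n k = card {p \<in> permutations_of_set {1..n}.
       card {i \<in> descents p. even i} = k \<and> (\<forall>i \<in> descents p. even i)}"

definition euler_num :: "nat \<Rightarrow> nat" where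
  "euler_num n = card {p \<in> permutations_of_set {1..n}.
       \<forall>i. 1 \<le> i \<and> i < n \<longrightarrow> (p ! (i - 1) > p ! i \<longleftrightarrow> odd i)}"

end

theory Submission
  imports Defs Complex_Main
begin

text \<open>
  Let \<open>F\<^sub>N(v) = \<Sum> t\<^bsup>des \<pi>\<^esup>\<close>, summed over the permutations of [N] ending in v, and evaluate at
  t = \<open>\<i>\<close>. Appending a new last letter v shifts the old letters \<open>\<ge> v\<close> up by one and creates a
  descent exactly when the old last letter was \<open>\<ge> v\<close>, so \<open>F\<^sub>N\<close> obeys the same insertion recurrence
  as the counts \<open>D\<^sub>N(v)\<close>, \<open>U\<^sub>N(v)\<close> of alternating permutations ending in v with a final descent
  resp. ascent (the boustrophedon recurrence). By induction
  \<open>F\<^sub>N(v) = (1+\<i>)\<^bsup>N-1\<^esup>/2 \<cdot> ((1+\<i>) D\<^sub>N(v) + (1-\<i>) U\<^sub>N(v))\<close>, and summing over v gives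
  \<open>\<Sum>\<^sub>k A\<^sub>N\<^sub>,\<^sub>k \<i>\<^sup>k = (1+\<i>)\<^bsup>N-1\<^esup> E\<^sub>N\<close>.

  Replacing every letter x by N + 1 - x complements the descent set; this gives the symmetry
  \<open>A\<^sub>N\<^sub>,\<^sub>k = A\<^sub>N\<^sub>,\<^sub>N\<^sub>-\<^sub>1\<^sub>-\<^sub>k\<close> and \<open>E\<^sub>N = a\<^sub>N\<^sub>,\<^sub>n\<close>. For a palindromic polynomial of degree M and
  z with \<open>cnj z = \<i>\<^sup>M z\<close>, the real part of z times its value at \<open>\<i>\<close> folds onto the first half of the
  coefficients; choosing z with \<open>z (1+\<i>)\<^sup>M = 2\<^sup>n\<close> yields the two formulas.
\<close>

section \<open>Complementation\<close>

abbreviation perms :: "nat \<Rightarrow> nat list set" where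
  "perms N \<equiv> permutations_of_set {1..N}"

lemma length_perms: "p \<in> perms N \<Longrightarrow> length p = N"
  using length_finite_permutations_of_set by fastforce

lemma last_perms: "p \<in> perms N \<Longrightarrow> 1 \<le> N \<Longrightarrow> last p \<in> {1..N}"
  by (metis last_in_set length_perms list.size(3) not_one_le_zero permutations_of_setD(1))

lemma descents_subset: "descents p \<subseteq> {1..<length p}"
  by (auto simp: descents_def)

lemma finite_descents [simp]: "finite (descents p)"
  using descents_subset finite_subset by blast

lemma descents_perms_subset: "p \<in> perms N \<Longrightarrow> descents p \<subseteq> {1..<N}"
  using descents_subset length_perms by metis

definition complement :: "nat \<Rightarrow> nat list \<Rightarrow> nat list" where
  "complement N p = map (\<lambda>x. Suc N - x) p"

lemma complement_perms:
  assumes "p \<in> perms N"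
  shows "complement N p \<in> perms N"
proof -
  have "(\<lambda>x. Suc N - x) ` {1..N} = {1..N}"
  proof (intro equalityI subsetI)
    fix x assume "x \<in> {1..N}"
    then show "x \<in> (\<lambda>x. Suc N - x) ` {1..N}"
      by (intro image_eqI[where x = "Suc N - x"]) auto
  qed auto
  moreover have "inj_on (\<lambda>x. Suc N - x) {1..N}"
    by (auto simp: inj_on_def)
  ultimately show ?thesis
    using assms unfolding complement_def by (metis image_eqI permutations_of_set_image_inj)
qed

lemma complement_complement: "p \<in> perms N \<Longrightarrow> complement N (complement N p) = p"
  by (auto simp: complement_def permutations_of_set_def intro!: map_idI)

lemma descents_complement:
  assumes "p \<in> perms N"
  shows "descents (complement N p) = {1..<N} - descents p"
proof -
  have p: "set p = {1..N}" "distinct p" "length p = N"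
    using assms length_perms by (auto dest: permutations_of_setD)
  have "i \<in> descents (complement N p) \<longleftrightarrow> i \<in> {1..<N} - descents p" if i: "1 \<le> i" "i < N" for i
  proof -
    have "p ! (i - 1) \<noteq> p ! i"
      using i p nth_eq_iff_index_eq[of p "i - 1" i] by auto
    moreover have "p ! (i - 1) \<le> N" "p ! i \<le> N"
      using i p nth_mem[of "i - 1" p] nth_mem[of i p] by auto
    ultimately show ?thesis
      using i p by (auto simp: descents_def complement_def)
  qed
  then show ?thesis
    using p by (auto simp: descents_def complement_def)
qed

lemma card_perms_descents_complement:
  "card {p \<in> perms N. P (descents p)} = card {p \<in> perms N. P ({1..<N} - descents p)}"
proof (rule bij_betw_same_card[of "complement N"], rule bij_betw_byWitness[where f' = "complement N"])
  show "complement N ` {p \<in> perms N. P (descents p)} \<subseteq> {p \<in> perms N. P ({1..<N} - descents p)}"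
  proof (intro image_subsetI, elim CollectE conjE, intro CollectI conjI)
    fix p assume "p \<in> perms N" "P (descents p)"
    then show "complement N p \<in> perms N" "P ({1..<N} - descents (complement N p))"
      using complement_perms descents_complement descents_perms_subset
      by (auto simp: Diff_Diff_Int Int_absorb1)
  qed
  show "complement N ` {p \<in> perms N. P ({1..<N} - descents p)} \<subseteq> {p \<in> perms N. P (descents p)}"
    using complement_perms descents_complement by auto
qed (auto simp: complement_complement)

lemma eulerian_symmetric:
  assumes "k \<le> N - 1"
  shows "eulerian N (N - 1 - k) = eulerian N k"
proof -
  have "card ({1..<N} - D) = N - 1 - k \<longleftrightarrow> card D = k" if "D \<subseteq> {1..<N}" for D
    using that assms card_mono[OF _ that] by (auto simp: card_Diff_subset finite_subset)
  then have "{p \<in> perms N. card ({1..<N} - descents p) = N - 1 - k} = {p \<in> perms N. card (descents p) = k}"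
    using descents_perms_subset by blast
  then show ?thesis
    unfolding eulerian_def card_perms_descents_complement[of N "\<lambda>D. card D = N - 1 - k"] by simp
qed

section \<open>Alternating permutations and Euler numbers\<close>

text \<open>Descent sets of the alternating permutations of [N] whose last step is a descent
  (\<open>alternating_down\<close>) resp. an ascent (\<open>alternating_up\<close>).\<close>

definition alternating_down :: "nat \<Rightarrow> nat set" where
  "alternating_down N = {i. 1 \<le> i \<and> i < N \<and> odd (N - i)}"

definition alternating_up :: "nat \<Rightarrow> nat set" where
  "alternating_up N = {i. 1 \<le> i \<and> i < N \<and> even (N - i)}"

lemma alternating_down_Suc: "1 \<le> N \<Longrightarrow> alternating_down (Suc N) = insert N (alternating_up N)"
  by (auto simp: alternating_down_def alternating_up_def less_Suc_eq)

lemma alternating_up_Suc: "alternating_up (Suc N) = alternating_down N"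
  by (auto simp: alternating_down_def alternating_up_def less_Suc_eq)

lemma alternating_up_eq_Diff: "alternating_up N = {1..<N} - alternating_down N"
  by (auto simp: alternating_down_def alternating_up_def)

lemma card_descents_eq_Diff:
  assumes "S \<subseteq> {1..<N}"
  shows "card {p \<in> perms N. descents p = S} = card {p \<in> perms N. descents p = {1..<N} - S}"
proof -
  have "{p \<in> perms N. {1..<N} - descents p = S} = {p \<in> perms N. descents p = {1..<N} - S}"
  proof (intro Collect_cong conj_cong refl)
    fix p assume "p \<in> perms N"
    then have "descents p \<subseteq> {1..<N}"
      by (rule descents_perms_subset)
    then show "{1..<N} - descents p = S \<longleftrightarrow> descents p = {1..<N} - S"
      using assms by blast
  qed
  with card_perms_descents_complement[of N "\<lambda>D. D = S"] show ?thesis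
    by simp
qed

lemma euler_num_eq_card_descents:
  "euler_num N = card {p \<in> perms N. descents p = {i \<in> {1..<N}. odd i}}"
proof -
  have "descents p = {i \<in> {1..<N}. odd i}
      \<longleftrightarrow> (\<forall>i. 1 \<le> i \<and> i < N \<longrightarrow> (p ! (i - 1) > p ! i \<longleftrightarrow> odd i))" if "p \<in> perms N" for p
    using length_perms[OF that] by (auto simp: descents_def)
  then show ?thesis
    unfolding euler_num_def by (metis (no_types, lifting) Collect_cong)
qed

lemma a_num_eq_card_descents:
  assumes "N = 2*n + 1 \<or> N = 2*n + 2"
  shows "a_num N n = card {p \<in> perms N. descents p = {i \<in> {1..<N}. even i}}"
proof -
  let ?E = "{i \<in> {1..<N}. even i}"
  have "?E = (\<lambda>j. 2*j) ` {1..n}"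
  proof (intro equalityI subsetI)
    fix i assume i: "i \<in> ?E"
    then obtain j where "i = 2*j"
      by (auto elim: evenE)
    with i assms show "i \<in> (\<lambda>j. 2*j) ` {1..n}"
      by (intro image_eqI[where x = j]) auto
  qed (use assms in auto)
  then have card_E: "card ?E = n"
    by (simp add: card_image inj_on_def)
  have "card {i \<in> descents p. even i} = n \<and> (\<forall>i \<in> descents p. even i) \<longleftrightarrow> descents p = ?E"
    if "p \<in> perms N" for p
  proof
    assume *: "card {i \<in> descents p. even i} = n \<and> (\<forall>i \<in> descents p. even i)"
    then have all_even: "{i \<in> descents p. even i} = descents p"
      by auto
    then have "descents p \<subseteq> ?E"
      using descents_perms_subset[OF that] * by auto
    moreover have "card (descents p) = card ?E"
      using * all_even card_E by simp
    ultimately show "descents p = ?E"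
      by (simp add: card_subset_eq)
  qed (use card_E in auto)
  then show ?thesis
    unfolding a_num_def by (metis (no_types, lifting) Collect_cong)
qed

lemma euler_num_eq_a_num:
  assumes "N = 2*n + 1 \<or> N = 2*n + 2"
  shows "euler_num N = a_num N n"
proof -
  have "euler_num N = card {p \<in> perms N. descents p = {1..<N} - {i \<in> {1..<N}. odd i}}"
    unfolding euler_num_eq_card_descents by (rule card_descents_eq_Diff) auto
  also have "{1..<N} - {i \<in> {1..<N}. odd i} = {i \<in> {1..<N}. even i}"
    by auto
  finally show ?thesis
    unfolding a_num_eq_card_descents[OF assms] .
qed

lemma card_descents_alternating:
  "card {p \<in> perms N. descents p = alternating_down N} = euler_num N"
  "card {p \<in> perms N. descents p = alternating_up N} = euler_num N"
proof -
  have same: "card {p \<in> perms N. descents p = alternating_up N}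
      = card {p \<in> perms N. descents p = alternating_down N}"
    unfolding alternating_up_eq_Diff
    by (rule card_descents_eq_Diff[symmetric]) (auto simp: alternating_down_def)
  have "{i \<in> {1..<N}. odd i} = (if even N then alternating_down N else alternating_up N)"
    by (auto simp: alternating_down_def alternating_up_def)
  then have "euler_num N = card {p \<in> perms N. descents p = alternating_down N}"
    unfolding euler_num_eq_card_descents using same by (cases "even N") simp_all
  then show "card {p \<in> perms N. descents p = alternating_down N} = euler_num N"
    "card {p \<in> perms N. descents p = alternating_up N} = euler_num N"
    using same by simp_all
qed

section \<open>Appending a last letter\<close>

definition shift_above :: "nat \<Rightarrow> nat \<Rightarrow> nat" where
  "shift_above v x = (if v \<le> x then Suc x else x)"

definition unshift_above :: "nat \<Rightarrow> nat \<Rightarrow> nat" where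
  "unshift_above v x = (if v < x then x - 1 else x)"

definition snoc_perm :: "nat \<Rightarrow> nat list \<Rightarrow> nat list" where
  "snoc_perm v p = map (shift_above v) p @ [v]"

lemma shift_above_less_iff [simp]: "shift_above v a < shift_above v b \<longleftrightarrow> a < b"
  by (auto simp: shift_above_def)

lemma unshift_shift_above [simp]: "unshift_above v (shift_above v x) = x"
  by (auto simp: shift_above_def unshift_above_def)

lemma shift_unshift_above: "x \<noteq> v \<Longrightarrow> shift_above v (unshift_above v x) = x"
  by (auto simp: shift_above_def unshift_above_def)

lemma image_shift_above:
  assumes "v \<in> {1..Suc N}"
  shows "shift_above v ` {1..N} = {1..Suc N} - {v}"
proof (intro equalityI subsetI)
  fix x assume "x \<in> {1..Suc N} - {v}"
  then show "x \<in> shift_above v ` {1..N}"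
    using assms shift_unshift_above[of x v]
    by (intro image_eqI[where x = "unshift_above v x"]) (auto simp: unshift_above_def)
qed (use assms in \<open>auto simp: shift_above_def\<close>)

lemma perms_butlast:
  assumes "q \<in> perms (Suc N)"
  shows "q = butlast q @ [last q]" "distinct (butlast q)" "set (butlast q) = {1..Suc N} - {last q}"
proof -
  have "q \<noteq> []"
    using assms by (auto dest: permutations_of_setD)
  then obtain r x where q: "q = r @ [x]"
    using rev_exhaust by blast
  show "q = butlast q @ [last q]"
    by (simp add: q)
  show "distinct (butlast q)" "set (butlast q) = {1..Suc N} - {last q}"
    using permutations_of_setD[OF assms] by (auto simp: q)
qed

lemma bij_betw_snoc_perm:
  assumes v: "v \<in> {1..Suc N}"
  shows "bij_betw (snoc_perm v) (perms N) {q \<in> perms (Suc N). last q = v}"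
proof (rule bij_betw_byWitness[where f' = "\<lambda>q. map (unshift_above v) (butlast q)"])
  have inj: "inj_on (shift_above v) A" for A
    by (metis inj_onI unshift_shift_above)
  show "\<forall>p\<in>perms N. map (unshift_above v) (butlast (snoc_perm v p)) = p"
    by (simp add: snoc_perm_def comp_def)
  show "\<forall>q\<in>{q \<in> perms (Suc N). last q = v}. snoc_perm v (map (unshift_above v) (butlast q)) = q"
  proof
    fix q assume "q \<in> {q \<in> perms (Suc N). last q = v}"
    then have hq: "q \<in> perms (Suc N)" "last q = v"
      by simp_all
    have "v \<notin> set (butlast q)"
      using perms_butlast(3)[OF hq(1)] hq(2) by simp
    then have "map (shift_above v) (map (unshift_above v) (butlast q)) = butlast q"
      by (auto intro!: map_idI shift_unshift_above)
    then show "snoc_perm v (map (unshift_above v) (butlast q)) = q"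
      unfolding snoc_perm_def using perms_butlast(1)[OF hq(1)] hq(2) by metis
  qed
  show "snoc_perm v ` perms N \<subseteq> {q \<in> perms (Suc N). last q = v}"
  proof (intro image_subsetI CollectI conjI)
    fix p assume p: "p \<in> perms N"
    have "set (map (shift_above v) p) = {1..Suc N} - {v}"
      using permutations_of_setD(1)[OF p] image_shift_above[OF v] by simp
    moreover have "distinct (map (shift_above v) p)"
      using permutations_of_setD(2)[OF p] inj by (simp add: distinct_map)
    ultimately show "snoc_perm v p \<in> perms (Suc N)"
      using v unfolding snoc_perm_def by (intro permutations_of_setI) auto
  qed (simp add: snoc_perm_def)
  show "(\<lambda>q. map (unshift_above v) (butlast q)) ` {q \<in> perms (Suc N). last q = v} \<subseteq> perms N"
  proof (intro image_subsetI, elim CollectE conjE)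
    fix q assume hq: "q \<in> perms (Suc N)" "last q = v"
    define r where "r = map (unshift_above v) (butlast q)"
    have "v \<notin> set (butlast q)"
      using perms_butlast(3)[OF hq(1)] hq(2) by simp
    then have shift_r: "map (shift_above v) r = butlast q"
      unfolding r_def by (auto intro!: map_idI shift_unshift_above)
    have "shift_above v ` set r = set (butlast q)"
      by (metis shift_r set_map)
    also have "\<dots> = shift_above v ` {1..N}"
      using perms_butlast(3)[OF hq(1)] hq(2) image_shift_above[OF v] by simp
    finally have "set r = {1..N}"
      using inj[of UNIV] by (simp add: inj_image_eq_iff)
    moreover have "distinct r"
      using shift_r perms_butlast(2)[OF hq(1)] inj by (metis distinct_map)
    ultimately show "map (unshift_above v) (butlast q) \<in> perms N"
      unfolding r_def[symmetric] by (rule permutations_of_setI)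
  qed
qed

lemma descents_snoc_perm:
  assumes "p \<noteq> []"
  shows "descents (snoc_perm v p) = descents p \<union> (if v \<le> last p then {length p} else {})"
proof -
  have nth_snoc: "snoc_perm v p ! i = (if i < length p then shift_above v (p ! i) else v)"
    if "i \<le> length p" for i
    using that by (auto simp: snoc_perm_def nth_append)
  have len: "length (snoc_perm v p) = Suc (length p)"
    by (simp add: snoc_perm_def)
  have last: "last p = p ! (length p - 1)" "length p \<ge> 1"
    using assms by (auto simp: last_conv_nth Suc_le_eq)
  have "i \<in> descents (snoc_perm v p) \<longleftrightarrow> i \<in> descents p \<or> (i = length p \<and> v \<le> last p)" for i
  proof (cases "i < length p")
    case True
    then show ?thesis
      using nth_snoc[of i] nth_snoc[of "i - 1"] by (auto simp: descents_def len)
  next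
    case False
    then show ?thesis
      using last nth_snoc[of "length p - 1"] nth_snoc[of "length p"]
      by (cases "i = length p") (auto simp: descents_def len shift_above_def)
  qed
  then show ?thesis
    by auto
qed

lemma sum_perms_by_last:
  assumes "1 \<le> N"
  shows "(\<Sum>v=1..N. \<Sum>p\<in>{p \<in> perms N. last p = v}. g p) = (\<Sum>p\<in>perms N. g p)"
  by (rule sum.group) (use last_perms assms in auto)

lemma sum_perms_Suc_last:
  assumes "1 \<le> N" "v \<in> {1..Suc N}"
  shows "(\<Sum>q\<in>{q \<in> perms (Suc N). last q = v}. g (descents q))
       = (\<Sum>u=1..N. \<Sum>p\<in>{p \<in> perms N. last p = u}. g (descents p \<union> (if v \<le> u then {N} else {})))"
proof -
  have "(\<Sum>q\<in>{q \<in> perms (Suc N). last q = v}. g (descents q)) = (\<Sum>p\<in>perms N. g (descents (snoc_perm v p)))"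
    using sum.reindex_bij_betw[OF bij_betw_snoc_perm[OF assms(2)], of "\<lambda>q. g (descents q)"] by simp
  also have "\<dots> = (\<Sum>p\<in>perms N. g (descents p \<union> (if v \<le> last p then {N} else {})))"
  proof (rule sum.cong[OF refl])
    fix p assume "p \<in> perms N"
    moreover from this have "p \<noteq> []"
      using assms(1) length_perms by fastforce
    ultimately show "g (descents (snoc_perm v p)) = g (descents p \<union> (if v \<le> last p then {N} else {}))"
      by (simp add: descents_snoc_perm length_perms)
  qed
  also have "\<dots> = (\<Sum>u=1..N. \<Sum>p\<in>{p \<in> perms N. last p = u}. g (descents p \<union> (if v \<le> last p then {N} else {})))"
    by (rule sum_perms_by_last[OF assms(1), symmetric])
  also have "\<dots> = (\<Sum>u=1..N. \<Sum>p\<in>{p \<in> perms N. last p = u}. g (descents p \<union> (if v \<le> u then {N} else {})))"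
    by (intro sum.cong refl) auto
  finally show ?thesis .
qed

section \<open>Refinement by the last letter\<close>

definition last_descent_count :: "nat \<Rightarrow> nat \<Rightarrow> nat set \<Rightarrow> nat" where
  "last_descent_count N v S = card {p \<in> perms N. last p = v \<and> descents p = S}"

lemma card_filter_eq_sum_of_bool: "finite A \<Longrightarrow> card {x \<in> A. P x} = (\<Sum>x\<in>A. of_bool (P x))"
  by (simp add: Int_def)

lemma last_descent_count_eq_sum:
  "last_descent_count N v S = (\<Sum>p\<in>{p \<in> perms N. last p = v}. of_bool (descents p = S))"
  unfolding last_descent_count_def
  by (subst card_filter_eq_sum_of_bool[symmetric]) (auto intro: arg_cong[where f = card])

lemma sum_last_descent_count:
  assumes "1 \<le> N"
  shows "(\<Sum>v=1..N. last_descent_count N v S) = card {p \<in> perms N. descents p = S}"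
  unfolding last_descent_count_eq_sum card_filter_eq_sum_of_bool[OF finite_permutations_of_set]
  by (rule sum_perms_by_last[OF assms])

lemma sum_if_le_split:
  assumes "1 \<le> v" "v \<le> Suc N"
  shows "(\<Sum>u=1..N. if v \<le> u then f u else g u) = (\<Sum>u=1..<v. g u) + (\<Sum>u=v..N. f u)"
proof -
  have "{1..N} = {1..<v} \<union> {v..N}" "{1..<v} \<inter> {v..N} = {}"
    using assms by auto
  then have "(\<Sum>u=1..N. if v \<le> u then f u else g u)
      = (\<Sum>u=1..<v. if v \<le> u then f u else g u) + (\<Sum>u=v..N. if v \<le> u then f u else g u)"
    by (simp add: sum.union_disjoint)
  then show ?thesis
    by simp
qed

lemma last_descent_count_Suc:
  assumes "1 \<le> N" "v \<in> {1..Suc N}" "N \<notin> S"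
  shows "last_descent_count (Suc N) v (insert N S) = (\<Sum>u=v..N. last_descent_count N u S)"
    and "last_descent_count (Suc N) v S = (\<Sum>u=1..<v. last_descent_count N u S)"
proof -
  have count_Suc: "last_descent_count (Suc N) v T
      = (\<Sum>u=1..N. \<Sum>p\<in>{p \<in> perms N. last p = u}. of_bool (descents p \<union> (if v \<le> u then {N} else {}) = T))"
    for T
    unfolding last_descent_count_eq_sum by (rule sum_perms_Suc_last[OF assms(1,2)])
  have N_notin: "N \<notin> descents p" if "p \<in> perms N" for p
    using descents_perms_subset[OF that] by auto
  have "(\<Sum>p\<in>{p \<in> perms N. last p = u}. of_bool (descents p \<union> (if v \<le> u then {N} else {}) = insert N S))
      = (if v \<le> u then last_descent_count N u S else 0)" for u
    unfolding last_descent_count_eq_sum using assms(3) N_notin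
    by (auto simp del: sum_of_bool_eq simp: insert_ident intro!: sum.cong)
  then show "last_descent_count (Suc N) v (insert N S) = (\<Sum>u=v..N. last_descent_count N u S)"
    using assms(2) sum_if_le_split[of v N _ "\<lambda>_. 0"] by (simp add: count_Suc)
  have "(\<Sum>p\<in>{p \<in> perms N. last p = u}. of_bool (descents p \<union> (if v \<le> u then {N} else {}) = S))
      = (if v \<le> u then 0 else last_descent_count N u S)" for u
    unfolding last_descent_count_eq_sum using assms(3) N_notin
    by (auto simp del: sum_of_bool_eq simp: insert_ident intro!: sum.cong)
  then show "last_descent_count (Suc N) v S = (\<Sum>u=1..<v. last_descent_count N u S)"
    using assms(2) sum_if_le_split[of v N "\<lambda>_. 0"] by (simp add: count_Suc)
qed

lemma last_descent_count_alternating_Suc: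
  assumes "1 \<le> N" "v \<in> {1..Suc N}"
  shows "last_descent_count (Suc N) v (alternating_down (Suc N))
           = (\<Sum>u=v..N. last_descent_count N u (alternating_up N))"
    and "last_descent_count (Suc N) v (alternating_up (Suc N))
           = (\<Sum>u=1..<v. last_descent_count N u (alternating_down N))"
proof -
  have "N \<notin> alternating_up N" "N \<notin> alternating_down N"
    by (simp_all add: alternating_up_def alternating_down_def)
  then show "last_descent_count (Suc N) v (alternating_down (Suc N))
           = (\<Sum>u=v..N. last_descent_count N u (alternating_up N))"
    and "last_descent_count (Suc N) v (alternating_up (Suc N))
           = (\<Sum>u=1..<v. last_descent_count N u (alternating_down N))"
    using assms by (simp_all add: alternating_down_Suc alternating_up_Suc last_descent_count_Suc)
qed

definition descent_poly_i_last :: "nat \<Rightarrow> nat \<Rightarrow> complex" where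
  "descent_poly_i_last N v = (\<Sum>p\<in>{p \<in> perms N. last p = v}. \<i> ^ card (descents p))"

lemma descent_poly_i_last_Suc:
  assumes "1 \<le> N" "v \<in> {1..Suc N}"
  shows "descent_poly_i_last (Suc N) v
           = (\<Sum>u=1..<v. descent_poly_i_last N u) + \<i> * (\<Sum>u=v..N. descent_poly_i_last N u)"
proof -
  have "descent_poly_i_last (Suc N) v
      = (\<Sum>u=1..N. \<Sum>p\<in>{p \<in> perms N. last p = u}. \<i> ^ card (descents p \<union> (if v \<le> u then {N} else {})))"
    unfolding descent_poly_i_last_def by (rule sum_perms_Suc_last[OF assms])
  also have "\<dots> = (\<Sum>u=1..N. if v \<le> u then \<i> * descent_poly_i_last N u else descent_poly_i_last N u)"
  proof (intro sum.cong refl)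
    fix u
    have "N \<notin> descents p" if "p \<in> perms N" for p
      using descents_perms_subset[OF that] by auto
    then show "(\<Sum>p\<in>{p \<in> perms N. last p = u}. \<i> ^ card (descents p \<union> (if v \<le> u then {N} else {})))
        = (if v \<le> u then \<i> * descent_poly_i_last N u else descent_poly_i_last N u)"
      by (auto simp: descent_poly_i_last_def sum_distrib_left intro!: sum.cong)
  qed
  finally show ?thesis
    using assms(2) sum_if_le_split[of v N "\<lambda>u. \<i> * descent_poly_i_last N u" "descent_poly_i_last N"]
    by (simp add: sum_distrib_left)
qed

lemma descent_poly_i_last_eq:
  assumes "v \<in> {1..N}"
  shows "descent_poly_i_last N v = (1 + \<i>) ^ (N - 1) / 2 *
           ((1 + \<i>) * of_nat (last_descent_count N v (alternating_down N))
          + (1 - \<i>) * of_nat (last_descent_count N v (alternating_up N)))"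
  using assms
proof (induction N arbitrary: v)
  case 0
  then show ?case by simp
next
  case (Suc N)
  show ?case
  proof (cases "N = 0")
    case True
    have "{p \<in> perms 1. last p = 1} = {[1]}" "{p \<in> perms 1. last p = 1 \<and> descents p = {}} = {[1]}"
      by (auto simp: descents_def)
    moreover have "alternating_down 1 = {}" "alternating_up 1 = {}" "descents [1] = {}"
      by (auto simp: alternating_down_def alternating_up_def descents_def)
    ultimately show ?thesis
      using True Suc.prems by (simp add: descent_poly_i_last_def last_descent_count_def)
  next
    case False
    then have N: "1 \<le> N"
      by simp
    define c where "c = (1 + \<i>) ^ (N - 1) / 2"
    define d where "d u = (of_nat (last_descent_count N u (alternating_down N)) :: complex)" for u
    define w where "w u = (of_nat (last_descent_count N u (alternating_up N)) :: complex)" for u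
    have IH: "descent_poly_i_last N u = c * ((1 + \<i>) * d u + (1 - \<i>) * w u)" if "u \<in> {1..N}" for u
      using Suc.IH[OF that] by (simp add: c_def d_def w_def)
    have split: "(\<Sum>u=1..N. f u) = (\<Sum>u=1..<v. f u) + (\<Sum>u=v..N. f u)" for f :: "nat \<Rightarrow> complex"
      using sum_if_le_split[of v N f f] Suc.prems by simp
    have "(\<Sum>u=1..N. d u) = of_nat (euler_num N)" "(\<Sum>u=1..N. w u) = of_nat (euler_num N)"
      unfolding d_def w_def of_nat_sum[symmetric] sum_last_descent_count[OF N]
      using card_descents_alternating by simp_all
    \<comment> \<open>Both totals are \<open>E\<^sub>N\<close>; this cancels the cross terms of the recurrence.\<close>
    then have total: "(\<Sum>u=1..<v. d u) + (\<Sum>u=v..N. d u) = (\<Sum>u=1..<v. w u) + (\<Sum>u=v..N. w u)"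
      unfolding split by simp
    have sum_IH: "(\<Sum>u\<in>A. descent_poly_i_last N u) = c * ((1 + \<i>) * (\<Sum>u\<in>A. d u) + (1 - \<i>) * (\<Sum>u\<in>A. w u))"
      if "A \<subseteq> {1..N}" for A
      using that by (simp add: IH subset_iff sum.distrib sum_distrib_left distrib_left cong: sum.cong)
    have "descent_poly_i_last (Suc N) v
        = c * ((1 + \<i>) * (\<Sum>u=1..<v. d u) + (1 - \<i>) * (\<Sum>u=1..<v. w u))
          + \<i> * (c * ((1 + \<i>) * (\<Sum>u=v..N. d u) + (1 - \<i>) * (\<Sum>u=v..N. w u)))"
    proof -
      have "{1..<v} \<subseteq> {1..N}" "{v..N} \<subseteq> {1..N}"
        using Suc.prems by auto
      then show ?thesis
        unfolding descent_poly_i_last_Suc[OF N Suc.prems] by (simp only: sum_IH)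
    qed
    also have "\<dots> = (1 + \<i>) ^ N / 2 * ((1 + \<i>) * (\<Sum>u=v..N. w u) + (1 - \<i>) * (\<Sum>u=1..<v. d u))"
    proof -
      have pow: "(1 + \<i>) ^ N = (1 + \<i>) * (1 + \<i>) ^ (N - 1)"
        using N by (cases N) simp_all
      have lower_w: "(\<Sum>u=1..<v. w u) = (\<Sum>u=1..<v. d u) + (\<Sum>u=v..N. d u) - (\<Sum>u=v..N. w u)"
        using total by (simp add: eq_diff_eq)
      show ?thesis
        unfolding c_def pow lower_w by (simp add: field_simps)
    qed
    finally show ?thesis
      using Suc.prems N
      by (simp add: last_descent_count_alternating_Suc d_def w_def)
  qed
qed

lemma sum_perms_power_card_descents:
  fixes x :: "'a::comm_semiring_1"
  assumes "1 \<le> N"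
  shows "(\<Sum>p\<in>perms N. x ^ card (descents p)) = (\<Sum>k<N. of_nat (eulerian N k) * x ^ k)"
proof -
  have "card (descents p) < N" if "p \<in> perms N" for p
    using card_mono[OF _ descents_perms_subset[OF that]] assms by fastforce
  then have "(\<Sum>p\<in>perms N. x ^ card (descents p))
      = (\<Sum>k<N. \<Sum>p\<in>{p \<in> perms N. card (descents p) = k}. x ^ card (descents p))"
    by (intro sum.group[symmetric]) auto
  also have "\<dots> = (\<Sum>k<N. \<Sum>p\<in>{p \<in> perms N. card (descents p) = k}. x ^ k)"
    by (intro sum.cong refl) auto
  finally show ?thesis
    by (simp add: eulerian_def)
qed

lemma eulerian_poly_eval_i:
  assumes "1 \<le> N"
  shows "(\<Sum>k<N. of_nat (eulerian N k) * \<i> ^ k) = (1 + \<i>) ^ (N - 1) * of_nat (euler_num N)"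
proof -
  have "(\<Sum>k<N. of_nat (eulerian N k) * \<i> ^ k) = (\<Sum>v=1..N. descent_poly_i_last N v)"
    unfolding descent_poly_i_last_def sum_perms_by_last[OF assms] sum_perms_power_card_descents[OF assms] ..
  also have "\<dots> = (\<Sum>v=1..N. (1 + \<i>) ^ (N - 1) / 2 *
           ((1 + \<i>) * of_nat (last_descent_count N v (alternating_down N))
          + (1 - \<i>) * of_nat (last_descent_count N v (alternating_up N))))"
    by (rule sum.cong[OF refl]) (rule descent_poly_i_last_eq)
  also have "\<dots> = (1 + \<i>) ^ (N - 1) / 2 *
      ((1 + \<i>) * of_nat (\<Sum>v=1..N. last_descent_count N v (alternating_down N))
     + (1 - \<i>) * of_nat (\<Sum>v=1..N. last_descent_count N v (alternating_up N)))"
    by (simp add: sum_distrib_left sum.distrib distrib_left)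
  also have "\<dots> = (1 + \<i>) ^ (N - 1) * of_nat (euler_num N)"
    unfolding sum_last_descent_count[OF assms] card_descents_alternating by (simp add: field_simps)
  finally show ?thesis .
qed

section \<open>Palindromic polynomials evaluated at \<open>\<i>\<close>\<close>

lemma sum_atMost_palindromic:
  fixes g :: "nat \<Rightarrow> 'a::comm_ring_1"
  assumes sym: "\<And>k. k \<le> M \<Longrightarrow> g (M - k) = g k"
  shows "(\<Sum>k\<le>M. g k) = 2 * (\<Sum>k\<le>M div 2. g k) - (if even M then g (M div 2) else 0)"
proof -
  define h where "h = M div 2"
  have "{..M} = {..h} \<union> {Suc h..M}" "{..h} \<inter> {Suc h..M} = {}"
    by (auto simp: h_def)
  then have split: "(\<Sum>k\<le>M. g k) = (\<Sum>k\<le>h. g k) + (\<Sum>k\<in>{Suc h..M}. g k)"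
    by (simp add: sum.union_disjoint)
  have "h \<le> M"
    by (simp add: h_def)
  then have "(\<Sum>k\<in>{Suc h..M}. g k) = (\<Sum>k<M - h. g k)"
    by (intro sum.reindex_bij_witness[where i = "\<lambda>k. M - k" and j = "\<lambda>k. M - k"]) (auto simp: sym)
  moreover have "(\<Sum>k<M - h. g k) = (\<Sum>k\<le>h. g k) - (if even M then g h else 0)"
  proof (cases "even M")
    case True
    then have "M - h = h"
      by (auto simp: h_def)
    then show ?thesis
      using True sum.lessThan_Suc[of g h, unfolded lessThan_Suc_atMost] by simp
  next
    case False
    then have "M - h = Suc h"
      by (auto simp: h_def elim: oddE)
    then show ?thesis
      using False by (simp add: lessThan_Suc_atMost)
  qed
  ultimately have "(\<Sum>k\<le>M. g k) = (\<Sum>k\<le>h. g k) + ((\<Sum>k\<le>h. g k) - (if even M then g h else 0))"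
    using split by simp
  then show ?thesis
    unfolding h_def by (simp add: algebra_simps flip: mult_2)
qed

lemma Re_palindromic_poly_eval:
  fixes A :: "nat \<Rightarrow> real"
  assumes sym: "\<And>k. k \<le> M \<Longrightarrow> A (M - k) = A k"
    and z: "cnj z = \<i> ^ M * z"
  shows "Re (z * (\<Sum>k\<le>M. of_real (A k) * \<i> ^ k))
       = 2 * (\<Sum>k\<le>M div 2. A k * Re (\<i> ^ k * z))
         - (if even M then A (M div 2) * Re (\<i> ^ (M div 2) * z) else 0)"
proof -
  \<comment> \<open>The weights \<open>Re (\<i>\<^sup>k z)\<close> are symmetric, so the sum folds.\<close>
  have "Re (\<i> ^ (M - k) * z) = Re (\<i> ^ k * z)" if "k \<le> M" for k
  proof -
    have "\<i> ^ M = \<i> ^ k * \<i> ^ (M - k)"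
      using that by (simp flip: power_add)
    then have "\<i> ^ (M - k) = (- \<i>) ^ k * \<i> ^ M"
      by (simp add: mult.assoc flip: power_mult_distrib)
    then have "\<i> ^ (M - k) * z = (- \<i>) ^ k * (\<i> ^ M * z)"
      by (simp add: mult.assoc)
    also have "\<dots> = cnj (\<i> ^ k * z)"
      by (simp add: z)
    finally show ?thesis
      by (metis cnj.sel(1))
  qed
  then have "(\<Sum>k\<le>M. A k * Re (\<i> ^ k * z))
      = 2 * (\<Sum>k\<le>M div 2. A k * Re (\<i> ^ k * z))
        - (if even M then A (M div 2) * Re (\<i> ^ (M div 2) * z) else 0)"
    using sym by (intro sum_atMost_palindromic) simp
  moreover have "Re (z * (\<Sum>k\<le>M. of_real (A k) * \<i> ^ k)) = (\<Sum>k\<le>M. A k * Re (\<i> ^ k * z))"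
    by (simp add: sum_distrib_left Re_sum right_diff_distrib mult.commute mult.left_commute)
  ultimately show ?thesis
    by simp
qed

lemma Re_i_power: "Re (\<i> ^ d) = (if even d then (-1) ^ (d div 2) else 0)"
proof (cases "even d")
  case False
  then obtain q where "d = 2 * q + 1"
    using oddE by blast
  then show ?thesis
    by (simp add: power_add power_mult)
qed simp

lemma i_power_mult_minus_i_power: "k \<le> n \<Longrightarrow> \<i> ^ k * (- \<i>) ^ n = cnj (\<i> ^ (n - k))"
proof -
  assume "k \<le> n"
  then have "(- \<i>) ^ n = (- \<i>) ^ k * (- \<i>) ^ (n - k)"
    by (simp flip: power_add)
  then have "\<i> ^ k * (- \<i>) ^ n = (\<i> * - \<i>) ^ k * (- \<i>) ^ (n - k)"
    by (simp only: power_mult_distrib mult.assoc)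
  then show ?thesis
    by simp
qed

lemma sum_atMost_even_terms:
  fixes f :: "nat \<Rightarrow> 'a::comm_monoid_add"
  shows "(\<Sum>d\<le>n. if even d then f (d div 2) else 0) = (\<Sum>i\<le>n div 2. f i)"
proof (induction n)
  case (Suc n)
  then show ?case
    by (cases "even n") (simp_all add: atMost_Suc)
qed simp

lemma Re_i_power_mult_1_plus_i:
  "Re (\<i> ^ d * (1 + \<i>)) = 2 * (\<Sum>j\<le>d div 2. (-1) ^ (d - j)) - (-1) ^ d"
proof (induction d rule: less_induct)
  case (less d)
  show ?case
  proof (cases "d < 2")
    case True
    then have "d = 0 \<or> d = 1"
      by auto
    then show ?thesis
      by auto
  next
    case False
    then obtain e where d: "d = Suc (Suc e)"
      by (metis add_2_eq_Suc le_Suc_ex not_less)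
    have "(-1::real) ^ (d - Suc j) = - ((-1) ^ (e - j))" if "j \<le> e div 2" for j
    proof -
      have "d - Suc j = Suc (e - j)"
        using that d by (simp add: Suc_diff_le)
      then show ?thesis
        by simp
    qed
    moreover have "d div 2 = Suc (e div 2)"
      by (simp add: d)
    then have "(\<Sum>j\<le>d div 2. (-1::real) ^ (d - j)) = (-1) ^ d + (\<Sum>j\<le>e div 2. (-1) ^ (d - Suc j))"
      by (simp only: sum.atMost_Suc_shift diff_zero)
    ultimately have "(\<Sum>j\<le>d div 2. (-1::real) ^ (d - j)) = (-1) ^ e - (\<Sum>j\<le>e div 2. (-1) ^ (e - j))"
      by (simp add: d sum_negf)
    then show ?thesis
      using less.IH[of e] by (simp add: d)
  qed
qed

lemma palindromic_eval_i_even_degree: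
  fixes A :: "nat \<Rightarrow> real"
  assumes sym: "\<And>k. k \<le> 2*n \<Longrightarrow> A (2*n - k) = A k"
    and eval: "(\<Sum>k\<le>2*n. of_real (A k) * \<i> ^ k) = (1 + \<i>) ^ (2*n) * of_real E"
  shows "2 ^ n * E = - A n + 2 * (\<Sum>i\<le>n div 2. (-1) ^ i * A (n - 2*i))"
proof -
  \<comment> \<open>\<open>z (1 + \<i>)\<^bsup>2n\<^esup> = 2\<^sup>n\<close>\<close>
  define z where "z = (- \<i>) ^ n"
  have "(1 + \<i>) ^ 2 = 2 * \<i>"
    by (simp add: power2_eq_square algebra_simps)
  then have i_2n: "\<i> ^ (2*n) = (-1) ^ n" "(1 + \<i>) ^ (2*n) = (2 * \<i>) ^ n"
    by (simp_all add: power_mult)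
  have "cnj z = \<i> ^ (2*n) * z"
    unfolding z_def i_2n by (subst power_mult_distrib[symmetric]) simp
  from Re_palindromic_poly_eval[where M = "2*n" and A = A, OF sym this]
  have "Re (z * ((1 + \<i>) ^ (2*n) * of_real E))
      = 2 * (\<Sum>k\<le>n. A k * Re (\<i> ^ k * z)) - A n * Re (\<i> ^ n * z)"
    unfolding eval by simp
  also have "Re (z * ((1 + \<i>) ^ (2*n) * of_real E)) = 2 ^ n * E"
  proof -
    have "- \<i> * (2 * \<i>) = 2"
      by (simp add: complex_eq_iff)
    then have "z * (2 * \<i>) ^ n = 2 ^ n"
      unfolding z_def by (metis power_mult_distrib)
    then have "z * ((1 + \<i>) ^ (2*n) * of_real E) = of_real (2 ^ n * E)"
      unfolding i_2n by (simp only: mult.assoc[symmetric]) simp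
    then show ?thesis
      by (simp only: Re_complex_of_real)
  qed
  also have "Re (\<i> ^ n * z) = 1"
    unfolding z_def by (subst power_mult_distrib[symmetric]) simp
  also have "(\<Sum>k\<le>n. A k * Re (\<i> ^ k * z)) = (\<Sum>k\<le>n. A k * Re (\<i> ^ (n - k)))"
    unfolding z_def by (intro sum.cong refl) (simp only: atMost_iff i_power_mult_minus_i_power cnj.sel(1))
  also have "\<dots> = (\<Sum>d\<le>n. A (n - d) * Re (\<i> ^ d))"
    using sum.atLeastAtMost_rev[of "\<lambda>k. A k * Re (\<i> ^ (n - k))" 0 n] by (simp add: atLeast0AtMost)
  also have "\<dots> = (\<Sum>d\<le>n. if even d then (-1) ^ (d div 2) * A (n - 2 * (d div 2)) else 0)"
    by (intro sum.cong refl) (auto simp: Re_i_power)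
  also have "\<dots> = (\<Sum>i\<le>n div 2. (-1) ^ i * A (n - 2*i))"
    by (rule sum_atMost_even_terms)
  finally show ?thesis
    by simp
qed

lemma palindromic_eval_i_odd_degree:
  fixes A :: "nat \<Rightarrow> real"
  assumes sym: "\<And>k. k \<le> 2*n + 1 \<Longrightarrow> A (2*n + 1 - k) = A k"
    and eval: "(\<Sum>k\<le>2*n + 1. of_real (A k) * \<i> ^ k) = (1 + \<i>) ^ (2*n + 1) * of_real E"
  shows "2 ^ n * E = - (\<Sum>j\<le>n. (-1) ^ (n - j) * A j)
           + 2 * (\<Sum>(i, j)\<in>{(i, j). 2*i + j \<le> n}. (-1) ^ (n - i - j) * A j)"
proof -
  \<comment> \<open>\<open>z (1 + \<i>)\<^bsup>2n+1\<^esup> = 2\<^sup>n\<close>\<close>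
  define z where "z = (- \<i>) ^ n * cnj (1 + \<i>) / 2"
  have "(1 + \<i>) ^ 2 = 2 * \<i>"
    by (simp add: power2_eq_square algebra_simps)
  then have i_2n: "\<i> ^ (2*n) = (-1) ^ n" "(1 + \<i>) ^ (2*n + 1) = (2 * \<i>) ^ n * (1 + \<i>)"
    by (simp_all add: power_mult)
  have "(-1) ^ n * (- \<i>) ^ n = \<i> ^ n"
    by (subst power_mult_distrib[symmetric]) simp
  then have "cnj z = \<i> ^ (2*n + 1) * z"
    unfolding z_def i_2n power_add by (simp add: algebra_simps)
  from Re_palindromic_poly_eval[where M = "2*n + 1" and A = A, OF sym this]
  have "Re (z * ((1 + \<i>) ^ (2*n + 1) * of_real E)) = 2 * (\<Sum>k\<le>n. A k * Re (\<i> ^ k * z))"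
    unfolding eval by simp
  also have "Re (z * ((1 + \<i>) ^ (2*n + 1) * of_real E)) = 2 ^ n * E"
  proof -
    have "- \<i> * (2 * \<i>) = 2" "cnj (1 + \<i>) * (1 + \<i>) = 2"
      by (simp_all add: complex_eq_iff)
    then have "(- \<i>) ^ n * (2 * \<i>) ^ n = 2 ^ n" "cnj (1 + \<i>) * (1 + \<i>) = 2"
      by (metis power_mult_distrib, simp)
    moreover have "z * (1 + \<i>) ^ (2*n + 1) = ((- \<i>) ^ n * (2 * \<i>) ^ n) * (cnj (1 + \<i>) * (1 + \<i>)) / 2"
      unfolding z_def i_2n by (simp only: mult_ac times_divide_eq_left times_divide_eq_right)
    ultimately have "z * (1 + \<i>) ^ (2*n + 1) = 2 ^ n"
      by simp
    then have "z * ((1 + \<i>) ^ (2*n + 1) * of_real E) = of_real (2 ^ n * E)"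
      by (simp only: mult.assoc[symmetric]) simp
    then show ?thesis
      by (simp only: Re_complex_of_real)
  qed
  also have "2 * (\<Sum>k\<le>n. A k * Re (\<i> ^ k * z)) = (\<Sum>k\<le>n. A k * Re (\<i> ^ (n - k) * (1 + \<i>)))"
  proof -
    have Re_z: "Re (\<i> ^ k * z) = Re (\<i> ^ (n - k) * (1 + \<i>)) / 2" if "k \<le> n" for k
    proof -
      have "\<i> ^ k * z = (\<i> ^ k * (- \<i>) ^ n) * cnj (1 + \<i>) / 2"
        unfolding z_def by (simp only: mult.assoc times_divide_eq_right)
      also have "\<dots> = cnj (\<i> ^ (n - k) * (1 + \<i>)) / 2"
        by (simp only: i_power_mult_minus_i_power[OF that] complex_cnj_mult)
      finally show ?thesis
        by (simp only: Re_divide_numeral cnj.sel(1))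
    qed
    show ?thesis
      unfolding sum_distrib_left
    proof (intro sum.cong refl)
      fix k assume "k \<in> {..n}"
      then have eq: "Re (\<i> ^ k * z) = Re (\<i> ^ (n - k) * (1 + \<i>)) / 2"
        by (intro Re_z) simp
      show "2 * (A k * Re (\<i> ^ k * z)) = A k * Re (\<i> ^ (n - k) * (1 + \<i>))"
        unfolding eq by simp
    qed
  qed
  also have "\<dots> = (\<Sum>j\<le>n. A j * (2 * (\<Sum>i\<le>(n - j) div 2. (-1) ^ (n - j - i)) - (-1) ^ (n - j)))"
    by (simp only: Re_i_power_mult_1_plus_i)
  also have "\<dots> = 2 * (\<Sum>j\<le>n. \<Sum>i\<le>(n - j) div 2. (-1) ^ (n - i - j) * A j) - (\<Sum>j\<le>n. (-1) ^ (n - j) * A j)"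
    by (simp add: algebra_simps sum_subtractf sum_distrib_left sum_distrib_right)
  also have "(\<Sum>j\<le>n. \<Sum>i\<le>(n - j) div 2. (-1) ^ (n - i - j) * A j)
      = (\<Sum>(i, j)\<in>{(i, j). 2*i + j \<le> n}. (-1) ^ (n - i - j) * A j)"
  proof -
    have "(\<Sum>j\<le>n. \<Sum>i\<le>(n - j) div 2. (-1) ^ (n - i - j) * A j)
        = (\<Sum>(j, i)\<in>(SIGMA j:{..n}. {..(n - j) div 2}). (-1) ^ (n - i - j) * A j)"
      by (rule sum.Sigma) auto
    also have "\<dots> = (\<Sum>(i, j)\<in>{(i, j). 2*i + j \<le> n}. (-1) ^ (n - i - j) * A j)"
      by (rule sum.reindex_bij_witness[where i = "\<lambda>(i, j). (j, i)" and j = "\<lambda>(j, i). (i, j)"]) auto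
    finally show ?thesis .
  qed
  finally show ?thesis
    by simp
qed

theorem corollary3p3:
  fixes n :: nat
  shows "euler_num (2*n+1) = a_num (2*n+1) n
       \<and> real (a_num (2*n+1) n) =
           (1 / 2^n) * (- real (eulerian (2*n+1) n)
             + 2 * (\<Sum>i=0..n div 2. (-1)^i * real (eulerian (2*n+1) (n - 2*i))))
       \<and> euler_num (2*n+2) = a_num (2*n+2) n
       \<and> real (a_num (2*n+2) n) =
           (1 / 2^n) * (- (\<Sum>j=0..n. (-1)^(n-j) * real (eulerian (2*n+2) j))
             + 2 * (\<Sum>(i,j) \<in> {(i,j). 2*i + j \<le> n}.
                      (-1)^(n-i-j) * real (eulerian (2*n+2) j)))"
proof (intro conjI)
  have odd: "euler_num (2*n+1) = a_num (2*n+1) n" and even: "euler_num (2*n+2) = a_num (2*n+2) n"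
    by (simp_all add: euler_num_eq_a_num)
  then show "euler_num (2*n+1) = a_num (2*n+1) n" "euler_num (2*n+2) = a_num (2*n+2) n"
    by simp_all
  have eval: "(\<Sum>k\<le>N - 1. of_real (real (eulerian N k)) * \<i> ^ k) = (1 + \<i>) ^ (N - 1) * of_real (real (euler_num N))"
    if "1 \<le> N" for N
    using eulerian_poly_eval_i[OF that] that by (simp add: lessThan_Suc_atMost[symmetric])
  have "2 ^ n * real (a_num (2*n+1) n) = - real (eulerian (2*n+1) n)
          + 2 * (\<Sum>i\<le>n div 2. (-1) ^ i * real (eulerian (2*n+1) (n - 2*i)))"
    using palindromic_eval_i_even_degree[of n "\<lambda>k. real (eulerian (2*n+1) k)"] eval[of "2*n+1"]
      eulerian_symmetric[of _ "2*n+1"] odd by simp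
  then show "real (a_num (2*n+1) n) = (1 / 2^n) * (- real (eulerian (2*n+1) n)
             + 2 * (\<Sum>i=0..n div 2. (-1)^i * real (eulerian (2*n+1) (n - 2*i))))"
    by (simp add: atLeast0AtMost field_simps)
  have "2 ^ n * real (a_num (2*n+2) n) = - (\<Sum>j\<le>n. (-1) ^ (n - j) * real (eulerian (2*n+2) j))
          + 2 * (\<Sum>(i, j)\<in>{(i, j). 2*i + j \<le> n}. (-1) ^ (n - i - j) * real (eulerian (2*n+2) j))"
    using palindromic_eval_i_odd_degree[of n "\<lambda>k. real (eulerian (2*n+2) k)"] eval[of "2*n+2"]
      eulerian_symmetric[of _ "2*n+2"] even by simp
  then show "real (a_num (2*n+2) n) = (1 / 2^n) * (- (\<Sum>j=0..n. (-1)^(n-j) * real (eulerian (2*n+2) j))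
             + 2 * (\<Sum>(i,j) \<in> {(i,j). 2*i + j \<le> n}. (-1)^(n-i-j) * real (eulerian (2*n+2) j)))"
    by (simp add: atLeast0AtMost field_simps)
qed

end
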